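(* For all integers $1\le l\le k$, the Fox function satisfies $\phi(2l,2k)=-\binom{k}{l}$.
   Context: For integers $0\le l\le k$, the Fox function is $\phi(l,k)=\sum_{\mathbf a}(-1)^{w(\mathbf a)+(l-1)}$, where the sum runs over all $l$-element subsets $\mathbf a\subseteq\{1,\dots,k\}$, $\mathbf b=\{1,\dots,k\}\setminus\mathbf a$, and $w(\mathbf a)$ is the number of pairs $(i,j)$ with $i\in\mathbf a$, $j\in\mathbf b$ and $j<i$. *)

theory Defs
  imports Main
begin

definition fox_w :: "nat \<Rightarrow> nat set \<Rightarrow> nat" where
  "fox_w k a = card {(i, j). i \<in> a \<and> j \<in> {1..k} - a \<and> j < i}"

text \<open>Fox function phi(l,k) = sum over l-subsets a of {1..k} of (-1)^(w(a)+(l-1)).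
  The sign (-1)^(l-1) is written as (-1)^(l+1), which agrees with it for all integers l
  (including l = 0).\<close>
definition fox_phi :: "nat \<Rightarrow> nat \<Rightarrow> int" where
  "fox_phi l k = (\<Sum>a\<in>{a. a \<subseteq> {1..k} \<and> card a = l}. (-1) ^ (fox_w k a + (l + 1)))"

end

theory Submission
  imports Defs
begin

text \<open>
  The signed count \<open>\<Sum>\<^sub>a (-1)^w(a)\<close> over the \<open>l\<close>-subsets \<open>a\<close> of \<open>{1..k}\<close> is the Gaussian
  binomial coefficient at \<open>q = -1\<close>. Splitting the subsets according to whether they contain
  \<open>k + 1\<close> gives the q-Pascal recurrence
  \<open>g(l+1, k+1) = g(l+1, k) + (-1)^(k-l) g(l, k)\<close>, since adding the top element creates
  exactly \<open>k - l\<close> new inversions. The closed form \<open>\<lfloor>k/2\<rfloor> choose \<lfloor>l/2\<rfloor>\<close> (replaced by \<open>0\<close>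
  when \<open>l\<close> is odd and \<open>k\<close> even) satisfies the same recurrence and initial values, so
  \<open>g(2l, 2k) = k choose l\<close>, and \<open>\<phi>(2l, 2k) = -g(2l, 2k)\<close>.
\<close>

definition card_subsets :: "nat \<Rightarrow> nat \<Rightarrow> nat set set" where
  "card_subsets l k = {a. a \<subseteq> {1..k} \<and> card a = l}"

definition fox_sign_sum :: "nat \<Rightarrow> nat \<Rightarrow> int" where
  "fox_sign_sum l k = (\<Sum>a\<in>card_subsets l k. (-1) ^ fox_w k a)"

definition gauss_binomial_neg_one :: "nat \<Rightarrow> nat \<Rightarrow> int" where
  "gauss_binomial_neg_one l k =
     (if odd l \<and> even k then 0 else int ((k div 2) choose (l div 2)))"

lemma finite_card_subsets: "finite (card_subsets l k)"
  unfolding card_subsets_def by (rule finite_subset[of _ "Pow {1..k}"]) auto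

lemma card_subsets_0: "card_subsets 0 k = {{}}"
  unfolding card_subsets_def using finite_subset[of _ "{1..k}"] by auto

lemma card_subsets_Suc_0: "card_subsets (Suc l) 0 = {}"
  unfolding card_subsets_def by auto

lemma card_subsets_Suc_Suc:
  "card_subsets (Suc l) (Suc k) = card_subsets (Suc l) k \<union> insert (Suc k) ` card_subsets l k"
proof
  show "card_subsets (Suc l) (Suc k) \<subseteq> card_subsets (Suc l) k \<union> insert (Suc k) ` card_subsets l k"
  proof
    fix a assume "a \<in> card_subsets (Suc l) (Suc k)"
    hence sub: "a \<subseteq> {1..Suc k}" and card: "card a = Suc l" unfolding card_subsets_def by auto
    have "finite a" using sub finite_subset by blast
    show "a \<in> card_subsets (Suc l) k \<union> insert (Suc k) ` card_subsets l k"
    proof (cases "Suc k \<in> a")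
      case True
      hence "a - {Suc k} \<in> card_subsets l k" and "a = insert (Suc k) (a - {Suc k})"
        using sub card \<open>finite a\<close> by (auto simp: card_subsets_def)
      thus ?thesis by blast
    next
      case False
      hence "a \<subseteq> {1..k}" using sub by (auto simp: le_Suc_eq)
      thus ?thesis using card unfolding card_subsets_def by auto
    qed
  qed
next
  have "insert (Suc k) b \<in> card_subsets (Suc l) (Suc k)" if "b \<in> card_subsets l k" for b
  proof -
    have "b \<subseteq> {1..k}" "card b = l" using that unfolding card_subsets_def by auto
    moreover have "finite b" "Suc k \<notin> b" using \<open>b \<subseteq> {1..k}\<close> finite_subset by auto
    ultimately show ?thesis unfolding card_subsets_def by auto
  qed
  thus "card_subsets (Suc l) k \<union> insert (Suc k) ` card_subsets l k \<subseteq> card_subsets (Suc l) (Suc k)"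
    by (auto simp: card_subsets_def)
qed

lemma fox_w_Suc:
  assumes "a \<subseteq> {1..k}"
  shows "fox_w (Suc k) a = fox_w k a"
proof -
  have "{(i, j). i \<in> a \<and> j \<in> {1..Suc k} - a \<and> j < i} = {(i, j). i \<in> a \<and> j \<in> {1..k} - a \<and> j < i}"
    using assms by auto
  thus ?thesis unfolding fox_w_def by simp
qed

lemma fox_w_Suc_insert:
  assumes "a \<subseteq> {1..k}"
  shows "fox_w (Suc k) (insert (Suc k) a) = fox_w k a + (k - card a)"
proof -
  let ?old = "{(i, j). i \<in> a \<and> j \<in> {1..k} - a \<and> j < i}"
  let ?new = "{Suc k} \<times> ({1..k} - a)"
  have "finite a" using assms finite_subset by blast
  have "{(i, j). i \<in> insert (Suc k) a \<and> j \<in> {1..Suc k} - insert (Suc k) a \<and> j < i} = ?old \<union> ?new"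
    using assms by auto
  moreover have "finite ?old"
    by (rule finite_subset[of _ "a \<times> {1..k}"]) (auto simp: \<open>finite a\<close>)
  moreover have "?old \<inter> ?new = {}" using assms by auto
  moreover have "card ?new = k - card a"
    using card_Diff_subset[OF \<open>finite a\<close> assms] by (simp add: card_cartesian_product)
  ultimately show ?thesis unfolding fox_w_def by (simp add: card_Un_disjoint)
qed

lemma fox_sign_sum_0: "fox_sign_sum 0 k = 1"
  by (simp add: fox_sign_sum_def card_subsets_0 fox_w_def)

lemma fox_sign_sum_Suc_0: "fox_sign_sum (Suc l) 0 = 0"
  by (simp add: fox_sign_sum_def card_subsets_Suc_0)

lemma fox_sign_sum_Suc_Suc:
  "fox_sign_sum (Suc l) (Suc k) = fox_sign_sum (Suc l) k + (-1) ^ (k - l) * fox_sign_sum l k"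
proof -
  have disjoint: "card_subsets (Suc l) k \<inter> insert (Suc k) ` card_subsets l k = {}"
    unfolding card_subsets_def by auto
  have "inj_on (insert (Suc k)) (card_subsets l k)"
    unfolding card_subsets_def inj_on_def by (metis Diff_insert_absorb atLeastAtMost_iff
        not_less_eq_eq order_refl subsetD mem_Collect_eq)
  hence "(\<Sum>a\<in>insert (Suc k) ` card_subsets l k. (-1::int) ^ fox_w (Suc k) a)
         = (\<Sum>a\<in>card_subsets l k. (-1) ^ fox_w (Suc k) (insert (Suc k) a))"
    by (simp add: sum.reindex)
  also have "\<dots> = (\<Sum>a\<in>card_subsets l k. (-1) ^ (k - l) * (-1) ^ fox_w k a)"
    by (rule sum.cong) (auto simp: card_subsets_def fox_w_Suc_insert power_add)
  finally have new: "(\<Sum>a\<in>insert (Suc k) ` card_subsets l k. (-1::int) ^ fox_w (Suc k) a)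
                     = (-1) ^ (k - l) * fox_sign_sum l k"
    by (simp add: fox_sign_sum_def sum_distrib_left)
  have old: "(\<Sum>a\<in>card_subsets (Suc l) k. (-1::int) ^ fox_w (Suc k) a) = fox_sign_sum (Suc l) k"
    unfolding fox_sign_sum_def by (rule sum.cong) (auto simp: card_subsets_def fox_w_Suc)
  have "fox_sign_sum (Suc l) (Suc k)
        = (\<Sum>a\<in>card_subsets (Suc l) k. (-1) ^ fox_w (Suc k) a)
          + (\<Sum>a\<in>insert (Suc k) ` card_subsets l k. (-1) ^ fox_w (Suc k) a)"
    unfolding fox_sign_sum_def card_subsets_Suc_Suc
    by (rule sum.union_disjoint) (simp_all add: finite_card_subsets disjoint)
  thus ?thesis by (simp only: old new)
qed

lemma gauss_binomial_neg_one_eq_0: "k < l \<Longrightarrow> gauss_binomial_neg_one l k = 0"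
  unfolding gauss_binomial_neg_one_def by auto presburger

lemma gauss_binomial_neg_one_Suc_Suc:
  "gauss_binomial_neg_one (Suc l) (Suc k)
     = gauss_binomial_neg_one (Suc l) k + (-1) ^ (k - l) * gauss_binomial_neg_one l k"
proof (cases "k < l")
  case True
  thus ?thesis by (simp add: gauss_binomial_neg_one_eq_0)
next
  case False
  obtain p where "k = 2 * p \<or> k = 2 * p + 1" by (metis oddE evenE)
  moreover obtain q where "l = 2 * q \<or> l = 2 * q + 1" by (metis oddE evenE)
  ultimately consider
      "k = 2 * p" "l = 2 * q" | "k = 2 * p" "l = 2 * q + 1"
    | "k = 2 * p + 1" "l = 2 * q" | "k = 2 * p + 1" "l = 2 * q + 1"
    by blast
  thus ?thesis
  proof cases
    case 1
    hence "even (k - l)" using False by presburger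
    with 1 show ?thesis by (simp add: gauss_binomial_neg_one_def)
  next
    case 2
    hence "odd (k - l)" using False by presburger
    with 2 show ?thesis by (simp add: gauss_binomial_neg_one_def)
  next
    case 3
    hence "odd (k - l)" using False by presburger
    with 3 show ?thesis by (simp add: gauss_binomial_neg_one_def)
  next
    case 4
    hence "even (k - l)" using False by presburger
    with 4 show ?thesis by (simp add: gauss_binomial_neg_one_def)
  qed
qed

lemma fox_sign_sum_eq_gauss_binomial_neg_one:
  "fox_sign_sum l k = gauss_binomial_neg_one l k"
proof (induction k arbitrary: l)
  case 0
  thus ?case
    by (cases l) (simp_all add: fox_sign_sum_0 fox_sign_sum_Suc_0 gauss_binomial_neg_one_def)
next
  case (Suc k)
  show ?case
  proof (cases l)
    case 0
    thus ?thesis by (simp add: fox_sign_sum_0 gauss_binomial_neg_one_def)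
  next
    case (Suc l')
    thus ?thesis
      by (simp only: fox_sign_sum_Suc_Suc gauss_binomial_neg_one_Suc_Suc Suc.IH)
  qed
qed

lemma fox_phi_eq_fox_sign_sum: "fox_phi l k = (-1) ^ (l + 1) * fox_sign_sum l k"
  unfolding fox_phi_def fox_sign_sum_def card_subsets_def
  by (simp add: power_add sum_distrib_left mult.commute)

theorem proposition2p5:
  fixes l k :: nat
  assumes "1 \<le> l" and "l \<le> k"
  shows "fox_phi (2 * l) (2 * k) = - int (k choose l)"
  by (simp add: fox_phi_eq_fox_sign_sum fox_sign_sum_eq_gauss_binomial_neg_one
      gauss_binomial_neg_one_def)

end
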